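(* Let $s,t,p\ge 1$, $A,B\in GL(n)$ and $Q\in\mathcal{P}(n)$. If $X$ is a Hermitian positive definite solution of $X^s+A^*X^{-t}A+B^*X^{-p}B=Q$, then $X\in[cI,\,Q^{1/s}]$, where $$c=\max\{\lambda_n^{1/t}(AQ^{-1}A^* ),\;\lambda_n^{1/p}(BQ^{-1}B^* )\}.$$
   Context: $GL(n)$: $n\times n$ complex nonsingular matrices; $\mathcal{P}(n)$: $n\times n$ Hermitian positive definite matrices. For Hermitian $M$, $\lambda_n(M)$ is its smallest eigenvalue. For Hermitian $P,R$, $P\le R$ means $R-P$ is positive semidefinite, and $[P,R]=\{X \text{ Hermitian}: P\le X\le R\}$. Real powers of positive definite matrices are defined by functional calculus. *)

theory Defs
  imports "HOL-Analysis.Analysis"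
begin

text \<open>Complex n x n matrices are rendered as complex^'n^'n (n = CARD('n)).\<close>

definition adjoint :: "complex^'n^'m \<Rightarrow> complex^'m^'n" where
  "adjoint M = (\<chi> i j. cnj (M $ j $ i))"

definition hermitian :: "complex^'n^'n \<Rightarrow> bool" where
  "hermitian M \<longleftrightarrow> adjoint M = M"

definition quad_form :: "complex^'n^'n \<Rightarrow> complex^'n \<Rightarrow> complex" where
  "quad_form M v = (\<Sum>i\<in>UNIV. cnj (v $ i) * (M *v v) $ i)"

definition pos_def :: "complex^'n^'n \<Rightarrow> bool" where
  "pos_def M \<longleftrightarrow> hermitian M \<and> (\<forall>v. v \<noteq> 0 \<longrightarrow> Re (quad_form M v) > 0)"

definition pos_semidef :: "complex^'n^'n \<Rightarrow> bool" where
  "pos_semidef M \<longleftrightarrow> hermitian M \<and> (\<forall>v. Re (quad_form M v) \<ge> 0)"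

definition loewner_le :: "complex^'n^'n \<Rightarrow> complex^'n^'n \<Rightarrow> bool" where
  "loewner_le P R \<longleftrightarrow> hermitian P \<and> hermitian R \<and> pos_semidef (R - P)"

definition real_diag :: "('n \<Rightarrow> real) \<Rightarrow> complex^'n^'n" where
  "real_diag d = (\<chi> i j. if i = j then complex_of_real (d i) else 0)"

definition unitary :: "complex^'n^'n \<Rightarrow> bool" where
  "unitary U \<longleftrightarrow> U ** adjoint U = mat 1 \<and> adjoint U ** U = mat 1"

definition mat_powr :: "complex^'n^'n \<Rightarrow> real \<Rightarrow> complex^'n^'n" where
  "mat_powr P r = (SOME Y. \<exists>U d. unitary U \<and> P = U ** real_diag d ** adjoint U
       \<and> Y = U ** real_diag (\<lambda>i. d i powr r) ** adjoint U)"

text \<open>Smallest eigenvalue of a Hermitian matrix (its eigenvalues are real).\<close>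
definition lambda_min :: "complex^'n^'n \<Rightarrow> real" where
  "lambda_min M = Min {x::real. \<exists>v. v \<noteq> 0 \<and> M *v v = complex_of_real x *s v}"

end

theory Submission
  imports Defs
begin

text \<open>Write Q = X^s + A^* X^-t A + B^* X^-p B, a sum of positive (semi)definite matrices, so each
  summand is below Q. From X^s \<le> Q the upper bound follows by the Loewner--Heinz inequality:
  x powr r is operator monotone for 0 < r \<le> 1, because x powr r is a positive combination of the
  functions x / (x + l) = 1 - l (x + l)^-1 and matrix inversion is order reversing. From
  A^* X^-t A \<le> Q one gets X^-t \<le> A^-* Q A^-1, hence, inverting, X^t \<ge> A Q^-1 A^*, which is at
  least its smallest eigenvalue times I; taking t-th roots of the eigenvalues of X gives the lower
  bound, and likewise for B. Matrix powers are handled through the spectral theorem, proved by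
  maximising the quadratic form over unit vectors of invariant subspaces.\<close>

definition cinner :: "complex^'n \<Rightarrow> complex^'n \<Rightarrow> complex" where
  "cinner u v = (\<Sum>i\<in>UNIV. cnj (u $ i) * v $ i)"

lemma quad_form_cinner: "quad_form M v = cinner v (M *v v)"
  by (simp add: quad_form_def cinner_def)

lemma adjoint_component [simp]: "adjoint M $ i $ j = cnj (M $ j $ i)"
  by (simp add: adjoint_def)

lemma adjoint_adjoint [simp]: "adjoint (adjoint M) = M"
  by (simp add: vec_eq_iff)

lemma adjoint_matrix_mult: "adjoint (A ** B) = adjoint B ** adjoint A"
  by (simp add: vec_eq_iff matrix_matrix_mult_def mult.commute)

lemma adjoint_add: "adjoint (A + B) = adjoint A + adjoint B"
  by (simp add: vec_eq_iff)

lemma adjoint_diff: "adjoint (A - B) = adjoint A - adjoint B"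
  by (simp add: vec_eq_iff)

lemma adjoint_mat: "adjoint (mat k :: complex^'n^'n) = mat (cnj k)"
  by (simp add: vec_eq_iff mat_def)

lemma adjoint_real_diag: "adjoint (real_diag d) = real_diag d"
  by (simp add: vec_eq_iff real_diag_def)

lemma cinner_adjoint: "cinner u (M *v v) = cinner (adjoint M *v u) v"
proof -
  have "cinner u (M *v v) = (\<Sum>i\<in>UNIV. \<Sum>j\<in>UNIV. cnj (u $ i) * M $ i $ j * v $ j)"
    by (simp add: cinner_def matrix_vector_mult_def sum_distrib_left mult.assoc)
  also have "\<dots> = (\<Sum>j\<in>UNIV. \<Sum>i\<in>UNIV. cnj (u $ i) * M $ i $ j * v $ j)"
    by (rule sum.swap)
  also have "\<dots> = cinner (adjoint M *v u) v"
    by (simp add: cinner_def matrix_vector_mult_def sum_distrib_left ac_simps)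
  finally show ?thesis .
qed

lemma cinner_commute: "cinner v u = cnj (cinner u v)"
  by (simp add: cinner_def mult.commute)

lemma cinner_add_left: "cinner (a + b) c = cinner a c + cinner b c"
  by (simp add: cinner_def algebra_simps sum.distrib)

lemma cinner_add_right: "cinner c (a + b) = cinner c a + cinner c b"
  by (simp add: cinner_def algebra_simps sum.distrib)

lemma cinner_diff_left: "cinner (a - b) c = cinner a c - cinner b c"
  by (simp add: cinner_def algebra_simps sum_subtractf)

lemma cinner_diff_right: "cinner c (a - b) = cinner c a - cinner c b"
  by (simp add: cinner_def algebra_simps sum_subtractf)

lemma cinner_scalar_left: "cinner (k *s a) c = cnj k * cinner a c"
  by (simp add: cinner_def sum_distrib_left mult.assoc)

lemma cinner_scalar_right: "cinner c (k *s a) = k * cinner c a"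
  by (simp add: cinner_def sum_distrib_left algebra_simps)

lemma scaleR_vec_component: "((r::real) *\<^sub>R (a::complex^'n)) $ i = complex_of_real r * a $ i"
  unfolding vector_scaleR_component by (rule scaleR_conv_of_real)

lemma cinner_scaleR_left: "cinner (r *\<^sub>R a) c = of_real r * cinner a c"
  by (simp only: cinner_def scaleR_vec_component sum_distrib_left) (simp add: ac_simps)

lemma cinner_scaleR_right: "cinner c (r *\<^sub>R a) = of_real r * cinner c a"
  by (simp only: cinner_def scaleR_vec_component sum_distrib_left) (simp add: ac_simps)

lemma cinner_zero_right [simp]: "cinner c 0 = 0"
  by (simp add: cinner_def)

lemma cinner_self: "cinner v v = complex_of_real ((norm v)\<^sup>2)"
proof -
  have "cinner v v = (\<Sum>i\<in>UNIV. complex_of_real ((cmod (v $ i))\<^sup>2))"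
    unfolding cinner_def
    by (intro sum.cong refl) (simp add: complex_norm_square mult.commute flip: of_real_power)
  also have "\<dots> = complex_of_real ((norm v)\<^sup>2)"
    by (simp add: norm_vec_def L2_set_def sum_nonneg)
  finally show ?thesis .
qed

lemma inner_vec_complex: "inner (x::complex^'n) y = Re (cinner x y)"
  by (simp add: inner_vec_def cinner_def inner_complex_def Re_sum)

lemma matrix_vector_mult_scaleR_complex: "(M::complex^'n^'m) *v (r *\<^sub>R a) = r *\<^sub>R (M *v a)"
  by (simp only: vec_eq_iff matrix_vector_mult_def scaleR_vec_component vec_lambda_beta
      sum_distrib_left) (simp add: ac_simps)

lemma matrix_vector_mult_scalar: "(M::complex^'n^'m) *v (k *s a) = k *s (M *v a)"
  by (simp add: vec_eq_iff matrix_vector_mult_def sum_distrib_left algebra_simps)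

lemma hermitian_cinner: "hermitian M \<Longrightarrow> cinner u (M *v v) = cinner (M *v u) v"
  using cinner_adjoint[of u M v] by (simp add: hermitian_def)

section \<open>Spectral theorem for Hermitian matrices\<close>

lemma exists_nonzero_orthogonal:
  fixes T :: "(complex^'n) set"
  assumes "finite T" "card T < CARD('n)"
  shows "\<exists>x. x \<noteq> 0 \<and> (\<forall>u\<in>T. cinner u x = 0)"
proof -
  \<comment> \<open>Complex orthogonality to u is real orthogonality to u and to i u.\<close>
  define R where "R = T \<union> (\<lambda>u. \<i> *s u) ` T"
  have "finite R" using assms(1) by (simp add: R_def)
  have "card R \<le> card T + card T"
    unfolding R_def using card_Un_le card_image_le[OF assms(1)] by (meson add_left_mono order_trans)
  then have "dim R < DIM(complex^'n)"
    using dim_le_card[OF span_superset \<open>finite R\<close>] assms(2) by simp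
  then obtain x :: "complex^'n" where x: "x \<noteq> 0" "\<And>y. y \<in> span R \<Longrightarrow> orthogonal x y"
    using orthogonal_to_subspace_exists[of R] by blast
  have "cinner u x = 0" if u: "u \<in> T" for u
  proof -
    have "Re (cinner x u) = 0" "Re (cinner x (\<i> *s u)) = 0"
      using x(2)[OF span_base] u by (auto simp: R_def orthogonal_def inner_vec_complex)
    then have "cinner x u = 0"
      by (simp add: cinner_scalar_right complex_eq_iff)
    then show ?thesis by (subst cinner_commute) simp
  qed
  with x show ?thesis by blast
qed

lemma continuous_on_cinner: "continuous_on UNIV (\<lambda>v. cinner u (v::complex^'n))"
  unfolding cinner_def by (intro continuous_intros)

lemma continuous_on_Re_quad_form: "continuous_on S (\<lambda>v. Re (quad_form H (v::complex^'n)))"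
  unfolding quad_form_def matrix_vector_mult_def by (intro continuous_intros)

lemma quad_form_scaleR: "quad_form H (r *\<^sub>R y) = complex_of_real (r\<^sup>2) * quad_form H y"
  by (simp add: quad_form_cinner matrix_vector_mult_scaleR_complex cinner_scaleR_left
      cinner_scaleR_right power2_eq_square)

lemma Re_quad_form_add_scaleR:
  assumes "hermitian H"
  shows "Re (quad_form H (v + e *\<^sub>R z)) =
     Re (quad_form H v) + 2 * e * Re (cinner z (H *v v)) + e\<^sup>2 * Re (quad_form H z)"
proof -
  have "cinner v (H *v z) = cnj (cinner z (H *v v))"
    using hermitian_cinner[OF assms, of v z] cinner_commute[of "H *v v" z] by simp
  then show ?thesis
    by (simp add: quad_form_cinner matrix_vector_right_distrib matrix_vector_mult_scaleR_complex
        cinner_add_left cinner_add_right cinner_scaleR_left cinner_scaleR_right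
        power2_eq_square algebra_simps)
qed

lemma norm_add_scaleR_power2:
  "(norm (v + e *\<^sub>R z))\<^sup>2 = (norm v)\<^sup>2 + 2 * e * Re (cinner z (v::complex^'n)) + e\<^sup>2 * (norm z)\<^sup>2"
proof -
  have "cinner v z = cnj (cinner z v)" by (rule cinner_commute)
  then have "Re (cinner (v + e *\<^sub>R z) (v + e *\<^sub>R z))
      = Re (cinner v v) + 2 * e * Re (cinner z v) + e\<^sup>2 * Re (cinner z z)"
    by (simp add: cinner_add_left cinner_add_right cinner_scaleR_left cinner_scaleR_right
        power2_eq_square algebra_simps)
  then show ?thesis by (simp add: cinner_self)
qed

lemma linear_le_quadratic_imp_zero:
  fixes a c :: real
  assumes "\<And>e. e * a \<le> e\<^sup>2 * c"
  shows "a = 0"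
proof (rule ccontr)
  assume "a \<noteq> 0"
  define e where "e = a / (\<bar>c\<bar> + 1)"
  have "e \<noteq> 0" "a = e * (\<bar>c\<bar> + 1)"
    using \<open>a \<noteq> 0\<close> by (simp_all add: e_def add_pos_nonneg)
  have "e\<^sup>2 * c \<le> e\<^sup>2 * \<bar>c\<bar>" by (simp add: mult_left_mono)
  also have "\<dots> < e\<^sup>2 * (\<bar>c\<bar> + 1)" using \<open>e \<noteq> 0\<close> by simp
  also have "\<dots> = e * a" by (simp add: \<open>a = _\<close> power2_eq_square)
  finally show False using assms[of e] by simp
qed

lemma rayleigh_quotient_stationary:
  assumes h: "hermitian H" and v: "norm v = 1"
    and max: "\<And>e. Re (quad_form H (v + e *\<^sub>R z)) \<le> Re (quad_form H v) * (norm (v + e *\<^sub>R z))\<^sup>2"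
  shows "Re (cinner z (H *v v)) = Re (quad_form H v) * Re (cinner z v)"
proof -
  define m where "m = Re (quad_form H v)"
  have "e * (2 * (Re (cinner z (H *v v)) - m * Re (cinner z v))) \<le>
      e\<^sup>2 * (m * (norm z)\<^sup>2 - Re (quad_form H z))" for e
    using max[of e] unfolding Re_quad_form_add_scaleR[OF h] norm_add_scaleR_power2 v m_def
    by (simp add: algebra_simps)
  from linear_le_quadratic_imp_zero[OF this] show ?thesis by (simp add: m_def)
qed

lemma hermitian_eigenvector_orthogonal:
  fixes H :: "complex^'n^'n" and T :: "(complex^'n) set"
  assumes h: "hermitian H"
    and invariant: "\<And>v. \<forall>u\<in>T. cinner u v = 0 \<Longrightarrow> \<forall>u\<in>T. cinner u (H *v v) = 0"
    and "x \<noteq> 0" "\<forall>u\<in>T. cinner u x = 0"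
  shows "\<exists>v m. norm v = 1 \<and> (\<forall>u\<in>T. cinner u v = 0) \<and> H *v v = complex_of_real m *s v"
proof -
  define W where "W = {v::complex^'n. \<forall>u\<in>T. cinner u v = 0}"
  have W_add: "y + r *\<^sub>R y' \<in> W" if "y \<in> W" "y' \<in> W" for y y' r
    using that by (simp add: W_def cinner_add_right cinner_scaleR_right)
  have "W = (\<Inter>u\<in>T. {v. cinner u v = 0})" by (auto simp: W_def)
  then have "closed W"
    by (auto intro!: closed_INT closed_Collect_eq continuous_on_cinner continuous_intros)
  define K where "K = W \<inter> sphere 0 1"
  have "compact K" unfolding K_def by (rule closed_Int_compact[OF \<open>closed W\<close> compact_sphere])
  moreover have "(1 / norm x) *\<^sub>R x \<in> K"
    using assms(3,4) by (auto simp: K_def W_def cinner_scaleR_right)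
  ultimately obtain v where "v \<in> K"
    and max: "\<And>y. y \<in> K \<Longrightarrow> Re (quad_form H y) \<le> Re (quad_form H v)"
    using continuous_attains_sup[of K, OF _ _ continuous_on_Re_quad_form] by blast
  then have v: "v \<in> W" "norm v = 1" by (auto simp: K_def)
  define m where "m = Re (quad_form H v)"
  have bound: "Re (quad_form H y) \<le> m * (norm y)\<^sup>2" if "y \<in> W" for y
  proof (cases "y = 0")
    case False
    have "(1 / norm y) *\<^sub>R y \<in> K"
      using False that by (simp add: K_def W_def cinner_scaleR_right)
    from max[OF this] False show ?thesis by (simp add: m_def quad_form_scaleR field_simps)
  qed (simp add: quad_form_def)
  define z where "z = H *v v - complex_of_real m *s v"
  have "z \<in> W" using v invariant by (simp add: z_def W_def cinner_diff_right cinner_scalar_right)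
  have "Re (cinner z (H *v v)) = m * Re (cinner z v)"
    unfolding m_def
    by (rule rayleigh_quotient_stationary[OF h v(2)])
      (use bound W_add[OF v(1) \<open>z \<in> W\<close>] in \<open>simp add: m_def\<close>)
  then have "Re (cinner z (H *v v - complex_of_real m *s v)) = 0"
    by (simp add: cinner_diff_right cinner_scalar_right)
  then have "H *v v - complex_of_real m *s v = 0"
    by (simp add: cinner_self flip: z_def)
  with v show ?thesis unfolding W_def by (intro exI[of _ v] exI[of _ m]) auto
qed

lemma hermitian_orthonormal_eigenvectors:
  fixes H :: "complex^'n^'n"
  assumes h: "hermitian H" and "finite (S::'n set)"
  shows "\<exists>u d. (\<forall>i\<in>S. \<forall>j\<in>S. cinner (u i) (u j) = (if i = j then 1 else 0))
      \<and> (\<forall>i\<in>S. H *v u i = complex_of_real (d i) *s u i)"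
  using \<open>finite S\<close>
proof (induction S rule: finite_induct)
  case (insert a S)
  then obtain u d where orth: "\<forall>i\<in>S. \<forall>j\<in>S. cinner (u i) (u j) = (if i = j then 1 else 0)"
    and eig: "\<forall>i\<in>S. H *v u i = complex_of_real (d i) *s u i" by blast
  define T where "T = u ` S"
  have "finite T" using insert(1) by (simp add: T_def)
  have "card S < CARD('n)"
    using insert by (intro psubset_card_mono) auto
  then have "card T < CARD('n)"
    using card_image_le[OF insert(1), of u] by (simp add: T_def)
  then obtain x where x: "x \<noteq> 0" "\<forall>w\<in>T. cinner w x = 0"
    using exists_nonzero_orthogonal[OF \<open>finite T\<close>] by blast
  have invariant: "\<forall>w\<in>T. cinner w (H *v y) = 0" if "\<forall>w\<in>T. cinner w y = 0" for y
  proof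
    fix w assume "w \<in> T"
    then obtain i where "i \<in> S" "w = u i" by (auto simp: T_def)
    then show "cinner w (H *v y) = 0"
      using that eig by (simp add: hermitian_cinner[OF h] cinner_scalar_left T_def)
  qed
  obtain v m where v: "norm v = 1" "\<forall>w\<in>T. cinner w v = 0" "H *v v = complex_of_real m *s v"
    using hermitian_eigenvector_orthogonal[OF h invariant x] by blast
  have "cinner v v = 1" using v(1) by (simp add: cinner_self)
  moreover have "cinner v (u j) = 0" if "j \<in> S" for j
    using v(2) that by (subst cinner_commute) (simp add: T_def)
  ultimately show ?case
    using orth eig v insert(2) by (intro exI[of _ "u(a := v)"] exI[of _ "d(a := m)"]) (auto simp: T_def)
qed simp

lemma hermitian_unitary_diagonalization:
  fixes H :: "complex^'n^'n"
  assumes "hermitian H"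
  shows "\<exists>U d. unitary U \<and> H = U ** real_diag d ** adjoint U"
proof -
  obtain u :: "'n \<Rightarrow> complex^'n" and d where
    orth: "\<forall>i j. cinner (u i) (u j) = (if i = j then 1 else 0)"
    and eig: "\<forall>i. H *v u i = complex_of_real (d i) *s u i"
    using hermitian_orthonormal_eigenvectors[OF assms, of UNIV] by auto
  define U :: "complex^'n^'n" where "U = (\<chi> r i. u i $ r)"
  have UU: "adjoint U ** U = mat 1"
    using orth by (simp add: vec_eq_iff matrix_matrix_mult_def U_def mat_def cinner_def)
  then have UU': "U ** adjoint U = mat 1" by (simp add: matrix_left_right_inverse)
  have "(H ** U) $ r $ i = (U ** real_diag d) $ r $ i" for r i
  proof -
    have "(H ** U) $ r $ i = (H *v u i) $ r"
      by (simp add: matrix_matrix_mult_def matrix_vector_mult_def U_def)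
    also have "\<dots> = (U ** real_diag d) $ r $ i"
      using eig by (simp add: matrix_matrix_mult_def U_def real_diag_def if_distrib mult.commute cong: if_cong)
    finally show ?thesis .
  qed
  then have HU: "H ** U = U ** real_diag d" by (simp add: vec_eq_iff)
  have "H = H ** (U ** adjoint U)" by (simp add: UU')
  also have "\<dots> = U ** real_diag d ** adjoint U" by (simp add: matrix_mul_assoc HU)
  finally have "H = U ** real_diag d ** adjoint U" .
  then show ?thesis using UU UU' unfolding unitary_def by blast
qed

section \<open>Functional calculus\<close>

lemma unitaryD: "unitary U \<Longrightarrow> adjoint U ** U = mat 1" "unitary U \<Longrightarrow> U ** adjoint U = mat 1"
  by (auto simp: unitary_def)

lemma unitary_adjoint_cancel: "unitary U \<Longrightarrow> adjoint U *v (U *v x) = x"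
  by (simp add: matrix_vector_mul_assoc unitaryD)

lemma real_diag_mult: "real_diag a ** real_diag b = real_diag (\<lambda>i. a i * b i)"
  by (simp add: vec_eq_iff matrix_matrix_mult_def real_diag_def if_distrib[of "\<lambda>x. x * _"]
      cong: if_cong)

lemma real_diag_matrix_vector_mult: "real_diag d *v c = (\<chi> i. complex_of_real (d i) * c $ i)"
  by (simp add: vec_eq_iff matrix_vector_mult_def real_diag_def if_distrib[of "\<lambda>x. x * _"]
      cong: if_cong)

lemma matrix_eq_axis:
  fixes A B :: "complex^'n^'m"
  assumes "\<And>i. A *v axis i 1 = B *v axis i 1"
  shows "A = B"
proof -
  have "A *v axis i 1 = (\<chi> r. A $ r $ i)" for A :: "complex^'n^'m" and i
    by (simp add: vec_eq_iff matrix_vector_mult_def axis_def if_distrib[of "\<lambda>x. _ * x"] cong: if_cong)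
  with assms show ?thesis by (simp add: vec_eq_iff)
qed

lemma unitary_diag_eigenvector_fun:
  assumes U: "unitary U" and M: "M = U ** real_diag d ** adjoint U"
    and v: "M *v v = complex_of_real l *s v"
  shows "(U ** real_diag (\<lambda>i. f (d i)) ** adjoint U) *v v = complex_of_real (f l) *s v"
proof -
  define c where "c = adjoint U *v v"
  have Uc: "U *v c = v" by (simp add: c_def matrix_vector_mul_assoc unitaryD[OF U])
  have decompose: "(U ** D ** adjoint U) *v v = U *v (D *v c)" for D
    by (simp add: c_def flip: matrix_vector_mul_assoc)
  have "U *v (real_diag d *v c) = U *v (complex_of_real l *s c)"
    using v decompose[of "real_diag d"] Uc M by (simp add: matrix_vector_mult_scalar)
  then have "real_diag d *v c = complex_of_real l *s c"
    by (metis unitary_adjoint_cancel[OF U])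
  then have "complex_of_real (d i) * c $ i = complex_of_real l * c $ i" for i
    by (simp add: real_diag_matrix_vector_mult vec_eq_iff)
  \<comment> \<open>Only coordinates of c belonging to the eigenvalue l are nonzero.\<close>
  then have "complex_of_real (f (d i)) * c $ i = complex_of_real (f l) * c $ i" for i
    by (cases "c $ i = 0") auto
  then have "real_diag (\<lambda>i. f (d i)) *v c = complex_of_real (f l) *s c"
    by (simp add: real_diag_matrix_vector_mult vec_eq_iff)
  then show ?thesis by (simp add: decompose matrix_vector_mult_scalar Uc)
qed

lemma unitary_diag_column_eigenvector:
  assumes U: "unitary U"
  shows "(U ** real_diag d ** adjoint U) *v (U *v axis i 1) = complex_of_real (d i) *s (U *v axis i 1)"
proof -
  have "(U ** real_diag d ** adjoint U) *v (U *v axis i 1)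
      = U *v (real_diag d *v (adjoint U *v (U *v axis i 1)))"
    by (simp flip: matrix_vector_mul_assoc)
  also have "\<dots> = U *v (real_diag d *v axis i 1)" by (simp only: unitary_adjoint_cancel[OF U])
  also have "real_diag d *v axis i 1 = complex_of_real (d i) *s axis i 1"
    by (simp add: real_diag_matrix_vector_mult vec_eq_iff axis_def)
  finally show ?thesis by (simp add: matrix_vector_mult_scalar)
qed

lemma unitary_diag_fun_unique:
  assumes U: "unitary U" and U': "unitary U'"
    and eq: "U ** real_diag d ** adjoint U = U' ** real_diag d' ** adjoint U'"
  shows "U ** real_diag (\<lambda>i. f (d i)) ** adjoint U = U' ** real_diag (\<lambda>i. f (d' i)) ** adjoint U'"
    (is "?Z = ?Y")
proof -
  \<comment> \<open>Both sides act by f(d i) on the i-th column of U, an eigenvector of the common matrix.\<close>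
  have "(?Z ** U) *v axis i 1 = (?Y ** U) *v axis i 1" for i
    using unitary_diag_eigenvector_fun[OF U refl unitary_diag_column_eigenvector[OF U]]
      unitary_diag_eigenvector_fun[OF U' eq unitary_diag_column_eigenvector[OF U]]
    by (simp flip: matrix_vector_mul_assoc)
  then have "?Z ** U ** adjoint U = ?Y ** U ** adjoint U" by (metis matrix_eq_axis)
  then show ?thesis by (simp only: matrix_mul_assoc[symmetric] unitaryD[OF U] matrix_mul_rid)
qed

lemma mat_powr_unitary_diag:
  assumes "unitary U" "M = U ** real_diag d ** adjoint U"
  shows "mat_powr M r = U ** real_diag (\<lambda>i. d i powr r) ** adjoint U"
proof -
  have "\<exists>Y U d. unitary U \<and> M = U ** real_diag d ** adjoint U
       \<and> Y = U ** real_diag (\<lambda>i. d i powr r) ** adjoint U" using assms by blast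
  from someI_ex[OF this] obtain U' d' where "unitary U'" "M = U' ** real_diag d' ** adjoint U'"
    and "mat_powr M r = U' ** real_diag (\<lambda>i. d' i powr r) ** adjoint U'"
    unfolding mat_powr_def by blast
  with unitary_diag_fun_unique[OF \<open>unitary U'\<close> \<open>unitary U\<close>, of d' d "\<lambda>x. x powr r"] assms
  show ?thesis by simp
qed

section \<open>Quadratic forms and the Loewner order\<close>

lemma matrix_vector_mult_mat: "mat k *v (v::complex^'n) = k *s v"
  by (simp add: vec_eq_iff matrix_vector_mult_def mat_def if_distrib[of "\<lambda>x. x * _"] cong: if_cong)

lemma quad_form_mat: "quad_form (mat (complex_of_real c)) v = complex_of_real (c * (norm v)\<^sup>2)"
  by (simp add: quad_form_cinner matrix_vector_mult_mat cinner_scalar_right cinner_self)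

lemma quad_form_add: "quad_form (P + R) v = quad_form P v + quad_form R v"
  by (simp add: quad_form_cinner matrix_vector_mult_add_rdistrib cinner_add_right)

lemma quad_form_diff: "quad_form (P - R) v = quad_form P v - quad_form R v"
  by (simp add: quad_form_cinner matrix_vector_mult_diff_rdistrib cinner_diff_right)

lemma quad_form_congruence: "quad_form (adjoint A ** M ** A) v = quad_form M (A *v v)"
  by (simp add: quad_form_cinner cinner_adjoint flip: matrix_vector_mul_assoc)

lemma quad_form_unitary_diag:
  "Re (quad_form (U ** real_diag d ** adjoint U) v) = (\<Sum>i\<in>UNIV. d i * (cmod ((adjoint U *v v) $ i))\<^sup>2)"
proof -
  define c where "c = adjoint U *v v"
  have "quad_form (U ** real_diag d ** adjoint U) v = cinner c (real_diag d *v c)"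
    by (simp add: quad_form_cinner c_def cinner_adjoint flip: matrix_vector_mul_assoc)
  also have "\<dots> = (\<Sum>i\<in>UNIV. complex_of_real (d i * (cmod (c $ i))\<^sup>2))"
    unfolding cinner_def real_diag_matrix_vector_mult
    by (intro sum.cong refl) (simp add: complex_norm_square mult.commute mult.left_commute flip: of_real_power)
  finally show ?thesis by (simp add: c_def)
qed

lemma hermitian_add: "hermitian P \<Longrightarrow> hermitian R \<Longrightarrow> hermitian (P + R)"
  by (simp add: hermitian_def adjoint_add)

lemma hermitian_mat: "hermitian (mat (complex_of_real c))"
  by (simp add: hermitian_def adjoint_mat)

lemma hermitian_congruence: "hermitian M \<Longrightarrow> hermitian (adjoint A ** M ** A)"
  by (simp add: hermitian_def adjoint_matrix_mult matrix_mul_assoc)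

lemma hermitian_unitary_diag: "hermitian (U ** real_diag d ** adjoint U)"
  by (simp add: hermitian_def adjoint_matrix_mult adjoint_real_diag matrix_mul_assoc)

lemma loewner_le_iff:
  "loewner_le P R \<longleftrightarrow> hermitian P \<and> hermitian R \<and> (\<forall>v. Re (quad_form P v) \<le> Re (quad_form R v))"
  by (auto simp: loewner_le_def pos_semidef_def quad_form_diff hermitian_def adjoint_diff)

lemma loewner_le_trans: "loewner_le P R \<Longrightarrow> loewner_le R S \<Longrightarrow> loewner_le P S"
  unfolding loewner_le_iff by (meson order_trans)

lemma loewner_le_congruence: "loewner_le P R \<Longrightarrow> loewner_le (adjoint A ** P ** A) (adjoint A ** R ** A)"
  unfolding loewner_le_iff by (simp add: hermitian_congruence quad_form_congruence)

lemma loewner_le_refl: "hermitian P \<Longrightarrow> loewner_le P P"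
  by (simp add: loewner_le_iff)

lemma loewner_le_add_right: "loewner_le P R \<Longrightarrow> pos_semidef S \<Longrightarrow> loewner_le P (R + S)"
  unfolding loewner_le_iff pos_semidef_def by (auto simp: hermitian_add quad_form_add intro: add_increasing2)

lemma loewner_le_add_left: "loewner_le P R \<Longrightarrow> pos_semidef S \<Longrightarrow> loewner_le P (S + R)"
  using loewner_le_add_right[of P R S] by (simp add: add.commute)

lemma pos_semidef_add: "pos_semidef P \<Longrightarrow> pos_semidef R \<Longrightarrow> pos_semidef (P + R)"
  by (simp add: pos_semidef_def hermitian_add quad_form_add)

lemma pos_semidef_congruence: "pos_semidef M \<Longrightarrow> pos_semidef (adjoint A ** M ** A)"
  by (simp add: pos_semidef_def hermitian_congruence quad_form_congruence)

lemma pos_def_imp_pos_semidef: "pos_def M \<Longrightarrow> pos_semidef M"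
  unfolding pos_def_def pos_semidef_def by (metis order.refl less_imp_le quad_form_cinner
      cinner_zero_right matrix_vector_mult_0_right zero_complex.simps(1))

lemma sum_cmod_adjoint_unitary:
  assumes "unitary U"
  shows "(\<Sum>i\<in>UNIV. (cmod ((adjoint U *v v) $ i))\<^sup>2) = (norm v)\<^sup>2"
proof -
  have "(\<Sum>i\<in>UNIV. (cmod ((adjoint U *v v) $ i))\<^sup>2)
      = Re (quad_form (U ** real_diag (\<lambda>i. 1) ** adjoint U) v)"
    by (simp add: quad_form_unitary_diag)
  also have "real_diag (\<lambda>i. 1) = (mat 1 :: complex^'n^'n)"
    by (simp add: vec_eq_iff real_diag_def mat_def)
  also have "Re (quad_form (U ** mat 1 ** adjoint U) v) = (norm v)\<^sup>2"
    using unitaryD[OF assms] quad_form_mat[of 1 v] by simp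
  finally show ?thesis .
qed

lemma norm_unitary_column:
  assumes "unitary U"
  shows "norm (U *v axis i 1) = 1"
proof -
  have "(norm (U *v axis i 1))\<^sup>2 = (\<Sum>j\<in>UNIV. (cmod (axis i 1 $ j))\<^sup>2)"
    by (simp add: sum_cmod_adjoint_unitary[OF assms, symmetric] unitary_adjoint_cancel[OF assms])
  also have "\<dots> = 1" by (simp add: axis_def if_distrib[of "\<lambda>x. (cmod x)\<^sup>2"] cong: if_cong)
  finally show ?thesis using norm_ge_zero[of "U *v axis i 1"] by (auto simp: power2_eq_1_iff)
qed

lemma quad_form_unitary_column:
  "unitary U \<Longrightarrow> Re (quad_form (U ** real_diag d ** adjoint U) (U *v axis i 1)) = d i"
  by (simp add: quad_form_cinner unitary_diag_column_eigenvector cinner_scalar_right cinner_self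
      norm_unitary_column)

lemma pos_def_unitary_diagonalization:
  assumes "pos_def X"
  obtains U d where "unitary U" "X = U ** real_diag d ** adjoint U" "\<And>i. d i > 0"
proof -
  have "hermitian X" using assms by (simp add: pos_def_def)
  then obtain U d where U: "unitary U" and X: "X = U ** real_diag d ** adjoint U"
    using hermitian_unitary_diagonalization by blast
  have "U *v axis i 1 \<noteq> 0" for i
    using norm_unitary_column[OF U, of i] by auto
  then have "0 < Re (quad_form X (U *v axis i 1))" for i
    using assms by (simp add: pos_def_def)
  then have "d i > 0" for i
    using quad_form_unitary_column[OF U] X by simp
  with U X that show ?thesis by blast
qed

lemma pos_def_unitary_diag:
  assumes U: "unitary U" and d: "\<And>i. d i > 0"
  shows "pos_def (U ** real_diag d ** adjoint U)"
proof -
  have "Re (quad_form (U ** real_diag d ** adjoint U) v) > 0" if "v \<noteq> 0" for v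
  proof -
    define c where "c = adjoint U *v v"
    have "U *v c = v" by (simp add: c_def matrix_vector_mul_assoc unitaryD[OF U])
    then have "c \<noteq> 0" using that by auto
    then obtain k where k: "c $ k \<noteq> 0" by (auto simp: vec_eq_iff)
    have "0 < d k * (cmod (c $ k))\<^sup>2" using k d[of k] by simp
    also have "\<dots> \<le> (\<Sum>i\<in>UNIV. d i * (cmod (c $ i))\<^sup>2)"
      by (rule member_le_sum) (auto intro: mult_nonneg_nonneg less_imp_le[OF d])
    finally show ?thesis by (simp add: quad_form_unitary_diag c_def)
  qed
  then show ?thesis by (simp add: pos_def_def hermitian_unitary_diag)
qed

lemma mat_le_unitary_diag:
  assumes U: "unitary U" and "\<And>i. c \<le> d i"
  shows "loewner_le (mat (complex_of_real c)) (U ** real_diag d ** adjoint U)"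
proof -
  have "Re (quad_form (mat (complex_of_real c)) v) = (\<Sum>i\<in>UNIV. c * (cmod ((adjoint U *v v) $ i))\<^sup>2)" for v
    by (simp add: quad_form_mat sum_cmod_adjoint_unitary[OF U] sum_distrib_left[symmetric])
  also have "\<dots> v \<le> Re (quad_form (U ** real_diag d ** adjoint U) v)" for v
    unfolding quad_form_unitary_diag by (intro sum_mono mult_right_mono assms) simp
  finally show ?thesis by (simp add: loewner_le_iff hermitian_mat hermitian_unitary_diag)
qed

lemma matrix_inv_eqI:
  fixes A B :: "'a::field^'n^'n"
  assumes AB: "A ** B = mat 1"
  shows "matrix_inv A = B"
proof -
  have "\<exists>A'. A ** A' = mat 1 \<and> A' ** A = mat 1"
    using AB matrix_left_right_inverse by blast
  from someI_ex[OF this] have "matrix_inv A ** A = mat 1"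
    unfolding matrix_inv_def by auto
  then have "matrix_inv A = matrix_inv A ** (A ** B)" by (simp add: AB)
  also have "\<dots> = B" by (simp add: matrix_mul_assoc \<open>matrix_inv A ** A = mat 1\<close>)
  finally show ?thesis .
qed

lemma invertible_matrix_inv:
  fixes A :: "'a::field^'n^'n"
  assumes "invertible A"
  shows "A ** matrix_inv A = mat 1" "matrix_inv A ** A = mat 1"
proof -
  obtain B where "A ** B = mat 1" using assms by (auto simp: invertible_def)
  then show "A ** matrix_inv A = mat 1" "matrix_inv A ** A = mat 1"
    using matrix_inv_eqI[of A B] matrix_left_right_inverse by auto
qed

lemma unitary_diag_mult:
  assumes "unitary U"
  shows "(U ** real_diag a ** adjoint U) ** (U ** real_diag b ** adjoint U)
    = U ** real_diag (\<lambda>i. a i * b i) ** adjoint U"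
proof -
  have "(U ** real_diag a ** adjoint U) ** (U ** real_diag b ** adjoint U)
     = U ** real_diag a ** (adjoint U ** U) ** real_diag b ** adjoint U"
    by (simp add: matrix_mul_assoc)
  also have "\<dots> = U ** (real_diag a ** real_diag b) ** adjoint U"
    by (simp add: unitaryD[OF assms] matrix_mul_assoc)
  finally show ?thesis by (simp add: real_diag_mult)
qed

lemma unitary_diag_mult_reciprocal:
  fixes U :: "complex^'n^'n"
  assumes U: "unitary U" and "\<And>i. d i \<noteq> 0"
  shows "(U ** real_diag d ** adjoint U) ** (U ** real_diag (\<lambda>i. 1 / d i) ** adjoint U) = mat 1"
proof -
  have "real_diag (\<lambda>i. d i * (1 / d i)) = (mat 1 :: complex^'n^'n)"
    using assms(2) by (simp add: vec_eq_iff real_diag_def mat_def)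
  then show ?thesis by (simp add: unitary_diag_mult[OF U] unitaryD[OF U])
qed

lemma unitary_diag_inverse:
  fixes U :: "complex^'n^'n"
  assumes "unitary U" and "\<And>i. d i \<noteq> 0"
  shows "matrix_inv (U ** real_diag d ** adjoint U) = U ** real_diag (\<lambda>i. 1 / d i) ** adjoint U"
  using unitary_diag_mult_reciprocal[OF assms] by (rule matrix_inv_eqI)

lemma pos_def_matrix_inv:
  assumes "pos_def A"
  shows "pos_def (matrix_inv A)" "A ** matrix_inv A = mat 1"
proof -
  obtain U d where U: "unitary U" and A: "A = U ** real_diag d ** adjoint U" and d: "\<And>i. d i > 0"
    using pos_def_unitary_diagonalization[OF assms] by blast
  have inv: "matrix_inv A = U ** real_diag (\<lambda>i. 1 / d i) ** adjoint U"
    unfolding A by (rule unitary_diag_inverse[OF U]) (simp add: d less_imp_neq[symmetric])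
  show "pos_def (matrix_inv A)"
    unfolding inv by (rule pos_def_unitary_diag[OF U]) (simp add: d)
  show "A ** matrix_inv A = mat 1"
    unfolding inv unfolding A by (rule unitary_diag_mult_reciprocal[OF U]) (simp add: d less_imp_neq[symmetric])
qed

lemma pos_def_invertible: "pos_def A \<Longrightarrow> invertible A"
  using pos_def_matrix_inv(2) matrix_left_right_inverse unfolding invertible_def by blast

lemma matrix_inv_antimono:
  assumes A: "pos_def A" and B: "pos_def B" and le: "loewner_le A B"
  shows "loewner_le (matrix_inv B) (matrix_inv A)"
proof -
  have hA: "hermitian A" and hAi: "hermitian (matrix_inv A)" and hBi: "hermitian (matrix_inv B)"
    using A B pos_def_matrix_inv by (auto simp: pos_def_def)
  have Ai: "A ** matrix_inv A = mat 1" and Bi: "B ** matrix_inv B = mat 1"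
    using A B pos_def_matrix_inv by blast+
  have "Re (quad_form (matrix_inv B) v) \<le> Re (quad_form (matrix_inv A) v)" for v
  proof -
    \<comment> \<open>Expand 0 \<le> <y, A y> for y = inv B v - inv A v and use <w, A w> \<le> <w, B w> at w = inv B v.\<close>
    define w where "w = matrix_inv B *v v"
    have Bw: "B *v w = v" by (simp add: w_def matrix_vector_mul_assoc Bi)
    have Aiv: "A *v (matrix_inv A *v v) = v" by (simp add: matrix_vector_mul_assoc Ai)
    have wv: "cinner w v = cinner v w"
      unfolding w_def using hermitian_cinner[OF hBi, of v v] by (metis cinner_commute)
    have "0 \<le> Re (quad_form A (w - matrix_inv A *v v))"
      using pos_def_imp_pos_semidef[OF A] by (simp add: pos_semidef_def)
    also have "quad_form A (w - matrix_inv A *v v)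
        = quad_form A w - cinner w v - cinner v w + quad_form (matrix_inv A) v"
      using hermitian_cinner[OF hA, of "matrix_inv A *v v" w] hermitian_cinner[OF hAi, of v v]
      by (simp add: quad_form_cinner matrix_vector_mult_diff_distrib Aiv cinner_diff_left cinner_diff_right)
    finally have "2 * Re (cinner v w) \<le> Re (quad_form A w) + Re (quad_form (matrix_inv A) v)"
      using wv by simp
    moreover have "Re (quad_form A w) \<le> Re (quad_form B w)" using le by (simp add: loewner_le_iff)
    moreover have "quad_form B w = cinner v w" by (simp add: quad_form_cinner Bw wv)
    moreover have "quad_form (matrix_inv B) v = cinner v w" by (simp add: quad_form_cinner w_def)
    ultimately show ?thesis by simp
  qed
  then show ?thesis using hAi hBi by (simp add: loewner_le_iff)
qed

lemma mat_commute: "(A::'a::comm_ring_1^'n^'n) ** mat k = mat k ** A"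
  by (simp add: vec_eq_iff matrix_matrix_mult_def mat_def if_distrib[of "\<lambda>x. x * _"]
      if_distrib[of "\<lambda>x. _ * x"] mult.commute cong: if_cong)

lemma matrix_add_rdistrib: "((A::'a::semiring_1^'n^'m) + B) ** C = A ** C + B ** C"
  by (simp add: vec_eq_iff matrix_matrix_mult_def distrib_right sum.distrib)

lemma unitary_diag_add_mat:
  fixes U :: "complex^'n^'n"
  assumes U: "unitary U"
  shows "U ** real_diag a ** adjoint U + mat (complex_of_real c)
    = U ** real_diag (\<lambda>i. a i + c) ** adjoint U"
proof -
  have "real_diag (\<lambda>i. a i + c) = real_diag a + (mat (complex_of_real c) :: complex^'n^'n)"
    by (simp add: vec_eq_iff real_diag_def mat_def)
  then have "U ** real_diag (\<lambda>i. a i + c) ** adjoint U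
      = U ** real_diag a ** adjoint U + U ** mat (complex_of_real c) ** adjoint U"
    by (simp add: matrix_add_ldistrib matrix_add_rdistrib)
  moreover have "U ** mat (complex_of_real c) ** adjoint U = mat (complex_of_real c)"
    by (simp add: mat_commute flip: matrix_mul_assoc) (simp add: unitaryD[OF U] matrix_mul_assoc)
  ultimately show ?thesis by simp
qed

section \<open>Matrix powers and the Loewner--Heinz inequality\<close>

lemma pos_def_add_mat:
  assumes "pos_def A" "0 \<le> c"
  shows "pos_def (A + mat (complex_of_real c))"
proof -
  obtain U d where U: "unitary U" and "A = U ** real_diag d ** adjoint U" "\<And>i. d i > 0"
    using pos_def_unitary_diagonalization[OF assms(1)] by blast
  with assms(2) show ?thesis
    by (simp add: unitary_diag_add_mat[OF U] pos_def_unitary_diag[OF U] add_pos_nonneg)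
qed

lemma mat_powr_pos_def:
  assumes "pos_def X"
  shows "pos_def (mat_powr X r)"
proof -
  obtain U d where U: "unitary U" and X: "X = U ** real_diag d ** adjoint U" and d: "\<And>i. d i > 0"
    using pos_def_unitary_diagonalization[OF assms] by blast
  show ?thesis
    unfolding mat_powr_unitary_diag[OF U X] by (rule pos_def_unitary_diag[OF U]) (metis d less_irrefl powr_gt_zero)
qed

lemma mat_powr_one:
  assumes "pos_def X"
  shows "mat_powr X 1 = X"
proof -
  obtain U d where U: "unitary U" and X: "X = U ** real_diag d ** adjoint U" and d: "\<And>i. d i > 0"
    using pos_def_unitary_diagonalization[OF assms] by blast
  have "(\<lambda>i. d i powr 1) = d" using d by (simp add: fun_eq_iff less_imp_le)
  with mat_powr_unitary_diag[OF U X, of 1] X show ?thesis by simp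
qed

lemma mat_powr_mat_powr:
  assumes "pos_def X"
  shows "mat_powr (mat_powr X a) b = mat_powr X (a * b)"
proof -
  obtain U d where U: "unitary U" and X: "X = U ** real_diag d ** adjoint U" and d: "\<And>i. d i > 0"
    using pos_def_unitary_diagonalization[OF assms] by blast
  have "(\<lambda>i. (d i powr a) powr b) = (\<lambda>i. d i powr (a * b))"
    using d by (simp add: fun_eq_iff powr_powr)
  then show ?thesis
    using mat_powr_unitary_diag[OF U mat_powr_unitary_diag[OF U X, of a], of b]
      mat_powr_unitary_diag[OF U X, of "a * b"] by simp
qed

text \<open>The kernel of the Stieltjes representation
  x powr r = sin (pi r) / pi * \<integral> l^(r-1) x / (x + l) dl  (0 < r < 1).
  Only positivity and finiteness of the constant matter, so it is kept as the integral of the kernel at x = 1.\<close>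
definition powr_kernel :: "real \<Rightarrow> real \<Rightarrow> real \<Rightarrow> real" where
  "powr_kernel r x l = (if 0 < l then l powr (r - 1) * (x / (x + l)) else 0)"

lemma powr_kernel_nonneg: "0 \<le> x \<Longrightarrow> 0 \<le> powr_kernel r x l"
  by (simp add: powr_kernel_def)

lemma borel_measurable_powr_kernel: "(\<lambda>l. ennreal (powr_kernel r x l)) \<in> borel_measurable borel"
  unfolding powr_kernel_def by measurable

lemma nn_integral_powr_kernel_scale:
  assumes x: "x > 0"
  shows "(\<integral>\<^sup>+l. powr_kernel r x l \<partial>lborel) = ennreal (x powr r) * (\<integral>\<^sup>+l. powr_kernel r 1 l \<partial>lborel)"
proof -
  have "powr_kernel r x (x * u) = x powr (r - 1) * powr_kernel r 1 u" for u
  proof (cases "u > 0")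
    case True
    have "x + x * u > 0" using True x by (simp add: add_pos_pos)
    then have "x / (x + x * u) = 1 / (1 + u)" using True x by (simp add: field_simps)
    then show ?thesis using True x by (simp add: powr_kernel_def powr_mult)
  qed (use x in \<open>simp add: powr_kernel_def zero_less_mult_iff\<close>)
  then have "(\<integral>\<^sup>+l. powr_kernel r x l \<partial>lborel)
      = ennreal x * (\<integral>\<^sup>+u. ennreal (x powr (r - 1)) * powr_kernel r 1 u \<partial>lborel)"
    using nn_integral_real_affine[OF borel_measurable_powr_kernel[of r x], of x 0] x
    by (simp add: ennreal_mult powr_kernel_nonneg)
  also have "\<dots> = ennreal (x * x powr (r - 1)) * (\<integral>\<^sup>+u. powr_kernel r 1 u \<partial>lborel)"
    using x by (simp add: nn_integral_cmult borel_measurable_powr_kernel ennreal_mult'' mult.assoc)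
  also have "x * x powr (r - 1) = x powr r" using x by (simp add: powr_mult_base)
  finally show ?thesis .
qed

lemma nn_integral_powr_kernel_finite:
  assumes r: "0 < r" "r < 1"
  shows "(\<integral>\<^sup>+l. powr_kernel r 1 l \<partial>lborel) < \<infinity>"
proof -
  \<comment> \<open>The kernel is at most l^(r-1) near 0 and at most l^(r-2) near infinity.\<close>
  have i1: "(\<integral>\<^sup>+u. ennreal (indicator {0..1} u * u powr (r - 1)) \<partial>lborel) = ennreal (1 / r)"
    using nn_integral_has_integral_lebesgue[OF _ has_integral_powr_from_0[of "r-1" 1]] r by simp
  have i2: "(\<integral>\<^sup>+u. ennreal (indicator {1..} u * u powr (r - 2)) \<partial>lborel) = ennreal (1 / (1 - r))"
    using nn_integral_has_integral_lebesgue[OF _ has_integral_powr_to_inf[of "r-2" 1]] r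
    by (simp add: field_simps)
  have "(\<integral>\<^sup>+u. powr_kernel r 1 u \<partial>lborel) \<le>
     (\<integral>\<^sup>+u. ennreal (indicator {0..1} u * u powr (r - 1)) + ennreal (indicator {1..} u * u powr (r - 2)) \<partial>lborel)"
  proof (rule nn_integral_mono)
    fix u :: real
    have "powr_kernel r 1 u \<le> indicator {0..1} u * u powr (r - 1) + indicator {1..} u * u powr (r - 2)"
    proof (cases "0 < u")
      case True
      show ?thesis
      proof (cases "u \<le> 1")
        case True
        have "u powr (r - 1) * (1 / (1 + u)) \<le> u powr (r - 1) * 1"
          using \<open>0 < u\<close> by (intro mult_left_mono) auto
        then show ?thesis
          using True \<open>0 < u\<close> unfolding powr_kernel_def by (auto intro!: add_increasing2)
      next
        case False
        have "u powr (r - 1) * (1 / (1 + u)) \<le> u powr (r - 1) / u"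
          using \<open>0 < u\<close> by (simp add: divide_left_mono)
        also have "\<dots> = u powr (r - 2)"
          using powr_diff[of u "r - 1" 1] \<open>0 < u\<close> by simp
        finally show ?thesis using False \<open>0 < u\<close> by (simp add: powr_kernel_def)
      qed
    qed (simp add: powr_kernel_def)
    then show "ennreal (powr_kernel r 1 u) \<le> ennreal (indicator {0..1} u * u powr (r - 1))
        + ennreal (indicator {1..} u * u powr (r - 2))"
      by (simp add: ennreal_plus[symmetric] del: ennreal_plus)
  qed
  also have "\<dots> = ennreal (1 / r) + ennreal (1 / (1 - r))"
    unfolding i1[symmetric] i2[symmetric] by (rule nn_integral_add) measurable
  also have "\<dots> < \<infinity>" by simp
  finally show ?thesis .
qed

lemma nn_integral_powr_kernel_pos:
  assumes "0 < r"
  shows "(\<integral>\<^sup>+l. powr_kernel r 1 l \<partial>lborel) > 0"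
proof -
  have "(\<integral>\<^sup>+(u::real). ennreal (1/6) * indicator {1..2} u \<partial>lborel) \<le> (\<integral>\<^sup>+u. powr_kernel r 1 u \<partial>lborel)"
  proof (rule nn_integral_mono)
    fix u :: real
    show "ennreal (1/6) * indicator {1..2} u \<le> ennreal (powr_kernel r 1 u)"
    proof (cases "u \<in> {1..2}")
      case True
      then have u: "1 \<le> u" "u \<le> 2" by auto
      have "1 / u \<le> u powr (r - 1)"
        using u assms powr_mono[of "-1" "r - 1" u] by (simp add: powr_minus_divide)
      moreover have "1/2 \<le> 1 / u" using u by simp
      ultimately have "1/2 \<le> u powr (r - 1)" by linarith
      then have "(1/2) / (1 + u) \<le> u powr (r - 1) / (1 + u)"
        using u by (intro divide_right_mono) auto
      moreover have "1/6 \<le> (1/2) / (1 + u)" using u by (simp add: field_simps)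
      ultimately have "1/6 \<le> u powr (r - 1) / (1 + u)" by linarith
      then show ?thesis using True u by (simp add: powr_kernel_def ennreal_leI)
    qed simp
  qed
  moreover have "(\<integral>\<^sup>+(u::real). ennreal (1/6) * indicator {1..2} u \<partial>lborel) = ennreal (1/6)"
    by (simp add: nn_integral_cmult_indicator)
  ultimately show ?thesis
    by (metis ennreal_less_zero_iff order_less_le_trans zero_less_divide_1_iff zero_less_numeral)
qed

text \<open>l^(r-1) <v, A (A + l)^-1 v>, written so that it is visibly antitone in (A + l)^-1.\<close>
definition resolvent_integrand :: "real \<Rightarrow> complex^'n^'n \<Rightarrow> complex^'n \<Rightarrow> real \<Rightarrow> real" where
  "resolvent_integrand r A v l = (if 0 < l then l powr (r - 1) *
     ((norm v)\<^sup>2 - l * Re (quad_form (matrix_inv (A + mat (complex_of_real l))) v)) else 0)"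

lemma resolvent_integrand_unitary_diag:
  assumes U: "unitary U" and a: "\<And>i. a i > 0"
  shows "resolvent_integrand r (U ** real_diag a ** adjoint U) v l
    = (\<Sum>i\<in>UNIV. (cmod ((adjoint U *v v) $ i))\<^sup>2 * powr_kernel r (a i) l)"
proof (cases "0 < l")
  case True
  define w where "w i = (cmod ((adjoint U *v v) $ i))\<^sup>2" for i
  have al: "a i + l \<noteq> 0" for i using a[of i] True by simp
  have "matrix_inv (U ** real_diag a ** adjoint U + mat (complex_of_real l))
      = U ** real_diag (\<lambda>i. 1 / (a i + l)) ** adjoint U"
    using unitary_diag_inverse[OF U al] by (simp add: unitary_diag_add_mat[OF U])
  then have "resolvent_integrand r (U ** real_diag a ** adjoint U) v l
      = l powr (r - 1) * ((\<Sum>i\<in>UNIV. w i) - l * (\<Sum>i\<in>UNIV. 1 / (a i + l) * w i))"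
    using True sum_cmod_adjoint_unitary[OF U, of v]
    by (simp add: resolvent_integrand_def quad_form_unitary_diag w_def)
  also have "\<dots> = (\<Sum>i\<in>UNIV. w i * powr_kernel r (a i) l)"
  proof -
    have "w i * powr_kernel r (a i) l = l powr (r - 1) * (w i - l * (1 / (a i + l) * w i))" for i
    proof -
      have "w i * powr_kernel r (a i) l = l powr (r - 1) * (w i * (a i / (a i + l)))"
        using True by (simp add: powr_kernel_def)
      also have "w i * (a i / (a i + l)) = w i - l * (1 / (a i + l) * w i)"
        using al[of i] by (simp add: field_simps)
      finally show ?thesis .
    qed
    then show ?thesis by (simp only: sum_distrib_left[symmetric] sum_subtractf)
  qed
  finally show ?thesis by (simp add: w_def)
qed (simp add: resolvent_integrand_def powr_kernel_def)

lemma mat_powr_resolvent_integral: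
  assumes "pos_def A"
  shows "ennreal (Re (quad_form (mat_powr A r) v)) * (\<integral>\<^sup>+l. powr_kernel r 1 l \<partial>lborel)
    = (\<integral>\<^sup>+l. resolvent_integrand r A v l \<partial>lborel)"
proof -
  obtain U a where U: "unitary U" and A: "A = U ** real_diag a ** adjoint U" and a: "\<And>i. a i > 0"
    using pos_def_unitary_diagonalization[OF assms] by blast
  define w where "w i = (cmod ((adjoint U *v v) $ i))\<^sup>2" for i
  have w: "w i \<ge> 0" for i by (simp add: w_def)
  have "Re (quad_form (mat_powr A r) v) = (\<Sum>i\<in>UNIV. w i * a i powr r)"
    by (simp add: mat_powr_unitary_diag[OF U A] quad_form_unitary_diag w_def mult.commute)
  then have "ennreal (Re (quad_form (mat_powr A r) v)) * (\<integral>\<^sup>+l. powr_kernel r 1 l \<partial>lborel)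
      = (\<Sum>i\<in>UNIV. ennreal (w i) * (ennreal (a i powr r) * (\<integral>\<^sup>+l. powr_kernel r 1 l \<partial>lborel)))"
    by (simp add: sum_ennreal[symmetric] w sum_distrib_right ennreal_mult mult.assoc)
  also have "\<dots> = (\<Sum>i\<in>UNIV. (\<integral>\<^sup>+l. ennreal (w i) * powr_kernel r (a i) l \<partial>lborel))"
    by (simp add: nn_integral_powr_kernel_scale[OF a] nn_integral_cmult borel_measurable_powr_kernel)
  also have "\<dots> = (\<integral>\<^sup>+l. (\<Sum>i\<in>UNIV. ennreal (w i) * powr_kernel r (a i) l) \<partial>lborel)"
    by (rule nn_integral_sum[symmetric]) (use borel_measurable_powr_kernel in simp)
  also have "\<dots> = (\<integral>\<^sup>+l. resolvent_integrand r A v l \<partial>lborel)"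
    by (intro nn_integral_cong) (simp add: A resolvent_integrand_unitary_diag[OF U a] w_def[symmetric]
        ennreal_mult w powr_kernel_nonneg less_imp_le[OF a] sum_ennreal[symmetric])
  finally show ?thesis .
qed

lemma resolvent_integrand_mono:
  assumes A: "pos_def A" and B: "pos_def B" and le: "loewner_le A B"
  shows "resolvent_integrand r A v l \<le> resolvent_integrand r B v l"
proof (cases "0 < l")
  case True
  have "loewner_le (A + mat (complex_of_real l)) (B + mat (complex_of_real l))"
    using le by (simp add: loewner_le_iff quad_form_add hermitian_add hermitian_mat)
  from matrix_inv_antimono[OF pos_def_add_mat[OF A] pos_def_add_mat[OF B] this]
  have "Re (quad_form (matrix_inv (B + mat (complex_of_real l))) v)
      \<le> Re (quad_form (matrix_inv (A + mat (complex_of_real l))) v)"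
    using True by (simp add: loewner_le_iff)
  then show ?thesis using True by (simp add: resolvent_integrand_def mult_left_mono)
qed (simp add: resolvent_integrand_def)

theorem loewner_le_mat_powr:
  assumes A: "pos_def A" and B: "pos_def B" and le: "loewner_le A B" and r: "0 < r" "r \<le> 1"
  shows "loewner_le (mat_powr A r) (mat_powr B r)"
proof (cases "r = 1")
  case True
  with A B le show ?thesis by (simp add: mat_powr_one)
next
  case False
  define C where "C = (\<integral>\<^sup>+l. powr_kernel r 1 l \<partial>lborel)"
  have "C \<noteq> 0" "C \<noteq> top"
    using nn_integral_powr_kernel_pos[OF r(1)] nn_integral_powr_kernel_finite[of r] r False
    by (auto simp: C_def)
  have "Re (quad_form (mat_powr A r) v) \<le> Re (quad_form (mat_powr B r) v)" for v
  proof -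
    have "ennreal (Re (quad_form (mat_powr A r) v)) * C \<le> ennreal (Re (quad_form (mat_powr B r) v)) * C"
      unfolding C_def mat_powr_resolvent_integral[OF A] mat_powr_resolvent_integral[OF B]
      by (intro nn_integral_mono ennreal_leI resolvent_integrand_mono[OF A B le])
    then have "ennreal (Re (quad_form (mat_powr A r) v)) \<le> ennreal (Re (quad_form (mat_powr B r) v))"
      using ennreal_mult_le_mult_iff[OF \<open>C \<noteq> 0\<close> \<open>C \<noteq> top\<close>] by (simp add: mult.commute)
    moreover have "Re (quad_form (mat_powr B r) v) \<ge> 0"
      using mat_powr_pos_def[OF B] pos_def_imp_pos_semidef by (auto simp: pos_semidef_def)
    ultimately show ?thesis by simp
  qed
  then show ?thesis
    using mat_powr_pos_def[OF A] mat_powr_pos_def[OF B] by (simp add: loewner_le_iff pos_def_def)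
qed

section \<open>The smallest eigenvalue\<close>

lemma eigenvalues_unitary_diag:
  fixes U :: "complex^'n^'n"
  assumes U: "unitary U" and M: "M = U ** real_diag e ** adjoint U"
  shows "{x::real. \<exists>v. v \<noteq> 0 \<and> M *v v = complex_of_real x *s v} = range e"
proof
  show "range e \<subseteq> {x. \<exists>v. v \<noteq> 0 \<and> M *v v = complex_of_real x *s v}"
  proof
    fix x assume "x \<in> range e"
    then obtain i where "x = e i" by blast
    then show "x \<in> {x. \<exists>v. v \<noteq> 0 \<and> M *v v = complex_of_real x *s v}"
      using unitary_diag_column_eigenvector[OF U, of e i] norm_unitary_column[OF U, of i] M
      by (intro CollectI exI[of _ "U *v axis i 1"]) auto
  qed
next
  show "{x. \<exists>v. v \<noteq> 0 \<and> M *v v = complex_of_real x *s v} \<subseteq> range e"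
  proof (rule subsetI, rule ccontr)
    fix x assume "x \<in> {x. \<exists>v. v \<noteq> 0 \<and> M *v v = complex_of_real x *s v}" "x \<notin> range e"
    then obtain v where v: "v \<noteq> 0" "M *v v = complex_of_real x *s v" by blast
    \<comment> \<open>Apply the indicator function of {x}, which vanishes on the spectrum.\<close>
    define f where "f y = (if y = x then 1 else (0::real))" for y
    have "(U ** real_diag (\<lambda>i. f (e i)) ** adjoint U) *v v = v"
      using unitary_diag_eigenvector_fun[OF U M v(2), of f] by (simp add: f_def)
    moreover have "real_diag (\<lambda>i. f (e i)) = (0 :: complex^'n^'n)"
      using \<open>x \<notin> range e\<close> by (auto simp: f_def vec_eq_iff real_diag_def)
    ultimately show False
      using v(1) by (simp add: vec_eq_iff matrix_vector_mult_def matrix_matrix_mult_def)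
  qed
qed

lemma lambda_min_unitary_diag:
  assumes "unitary U" "M = U ** real_diag e ** adjoint U"
  shows "lambda_min M \<in> range e" "lambda_min M \<le> e i"
  unfolding lambda_min_def eigenvalues_unitary_diag[OF assms] by auto

lemma lambda_min_pos_def:
  assumes "pos_def M"
  shows "lambda_min M > 0" "loewner_le (mat (complex_of_real (lambda_min M))) M"
proof -
  obtain U e where U: "unitary U" and M: "M = U ** real_diag e ** adjoint U" and "\<And>i. e i > 0"
    using pos_def_unitary_diagonalization[OF assms] by blast
  then show "lambda_min M > 0" using lambda_min_unitary_diag(1)[OF U M] by auto
  show "loewner_le (mat (complex_of_real (lambda_min M))) M"
    using mat_le_unitary_diag[OF U lambda_min_unitary_diag(2)[OF U M]] M by simp
qed

lemma mat_le_mat_powr_imp_mat_le: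
  assumes X: "pos_def X" and t: "t > 0" and c: "c > 0"
    and le: "loewner_le (mat (complex_of_real c)) (mat_powr X t)"
  shows "loewner_le (mat (complex_of_real (c powr (1/t)))) X"
proof -
  obtain U d where U: "unitary U" and Xd: "X = U ** real_diag d ** adjoint U" and d: "\<And>i. d i > 0"
    using pos_def_unitary_diagonalization[OF X] by blast
  have "c powr (1/t) \<le> d i" for i
  proof -
    have "Re (quad_form (mat (complex_of_real c)) (U *v axis i 1))
        \<le> Re (quad_form (mat_powr X t) (U *v axis i 1))"
      using le by (simp add: loewner_le_iff)
    then have "c \<le> d i powr t"
      by (simp add: quad_form_mat mat_powr_unitary_diag[OF U Xd] quad_form_unitary_column[OF U]
          norm_unitary_column[OF U])
    then have "c powr (1/t) \<le> (d i powr t) powr (1/t)"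
      using c t by (intro powr_mono2) auto
    also have "\<dots> = d i" using t d[of i] by (simp add: powr_powr)
    finally show ?thesis .
  qed
  then show ?thesis unfolding Xd by (rule mat_le_unitary_diag[OF U])
qed

lemma matrix_inv_mat_powr:
  assumes "pos_def X"
  shows "matrix_inv (mat_powr X r) = mat_powr X (- r)"
proof -
  obtain U d where U: "unitary U" and X: "X = U ** real_diag d ** adjoint U" and d: "\<And>i. d i > 0"
    using pos_def_unitary_diagonalization[OF assms] by blast
  have "(\<lambda>i. 1 / d i powr r) = (\<lambda>i. d i powr (- r))"
    by (simp add: fun_eq_iff powr_minus divide_inverse)
  then show ?thesis
    using unitary_diag_inverse[OF U, of "\<lambda>i. d i powr r"] d
    by (simp add: mat_powr_unitary_diag[OF U X] less_imp_neq[symmetric])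
qed

lemma pos_def_congruence:
  fixes E F Q :: "complex^'n^'n"
  assumes Q: "pos_def Q" and FE: "F ** E = mat 1"
  shows "pos_def (adjoint F ** Q ** F)"
proof -
  have "F *v v \<noteq> 0" if "v \<noteq> 0" for v
    using that FE matrix_left_right_inverse[of F E] by (metis matrix_vector_mul_assoc
        matrix_vector_mul_lid matrix_vector_mult_0_right)
  then show ?thesis
    using Q by (simp add: pos_def_def hermitian_congruence quad_form_congruence)
qed

lemma matrix_inv_congruence:
  fixes E F Q :: "complex^'n^'n"
  assumes EF: "E ** F = mat 1" and Q: "invertible Q"
  shows "matrix_inv (adjoint F ** Q ** F) = E ** matrix_inv Q ** adjoint E"
proof (rule matrix_inv_eqI)
  have FE: "F ** E = mat 1" using EF matrix_left_right_inverse by blast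
  have "(adjoint F ** Q ** F) ** (E ** matrix_inv Q ** adjoint E)
      = adjoint F ** Q ** (F ** E) ** matrix_inv Q ** adjoint E"
    by (simp only: matrix_mul_assoc)
  also have "\<dots> = adjoint F ** (Q ** matrix_inv Q) ** adjoint E"
    by (simp add: FE matrix_mul_assoc)
  also have "\<dots> = adjoint (E ** F)"
    by (simp add: invertible_matrix_inv(1)[OF Q] adjoint_matrix_mult)
  finally show "(adjoint F ** Q ** F) ** (E ** matrix_inv Q ** adjoint E) = mat 1"
    by (simp add: EF adjoint_mat)
qed

lemma mat_lambda_min_powr_le:
  fixes E Q X :: "complex^'n^'n"
  assumes t: "t > 0" and E: "invertible E" and Q: "pos_def Q" and X: "pos_def X"
    and le: "loewner_le (adjoint E ** mat_powr X (-t) ** E) Q"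
  shows "loewner_le (mat (complex_of_real (lambda_min (E ** matrix_inv Q ** adjoint E) powr (1/t)))) X"
proof -
  \<comment> \<open>Undo the congruence by E, invert, and bound E Q^-1 E^* from below by its smallest eigenvalue.\<close>
  define F where "F = matrix_inv E"
  have EF: "E ** F = mat 1" and FE: "F ** E = mat 1"
    using invertible_matrix_inv[OF E] by (simp_all add: F_def)
  have "adjoint F ** (adjoint E ** mat_powr X (-t) ** E) ** F
      = adjoint (E ** F) ** mat_powr X (-t) ** (E ** F)"
    by (simp add: adjoint_matrix_mult matrix_mul_assoc)
  also have "\<dots> = mat_powr X (-t)" by (simp add: EF adjoint_mat)
  finally have "loewner_le (mat_powr X (-t)) (adjoint F ** Q ** F)"
    using loewner_le_congruence[OF le, of F] by simp
  then have "loewner_le (E ** matrix_inv Q ** adjoint E) (mat_powr X t)"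
    using matrix_inv_antimono[OF mat_powr_pos_def[OF X, of "-t"] pos_def_congruence[OF Q FE]]
    by (simp add: matrix_inv_congruence[OF EF] matrix_inv_mat_powr[OF X]
        pos_def_invertible[OF Q])
  moreover have "pos_def (E ** matrix_inv Q ** adjoint E)"
    using pos_def_congruence[OF pos_def_matrix_inv(1)[OF Q], of "adjoint E" "adjoint F"]
    by (simp add: adjoint_matrix_mult[symmetric] FE adjoint_mat)
  ultimately show ?thesis
    using mat_le_mat_powr_imp_mat_le[OF X t] lambda_min_pos_def loewner_le_trans by blast
qed

section \<open>The bounds on the solution\<close>

lemma loewner_le_mat_powr_root:
  assumes X: "pos_def X" and Q: "pos_def Q" and s: "s \<ge> 1" and le: "loewner_le (mat_powr X s) Q"
  shows "loewner_le X (mat_powr Q (1/s))"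
proof -
  have "loewner_le (mat_powr (mat_powr X s) (1/s)) (mat_powr Q (1/s))"
    by (rule loewner_le_mat_powr[OF mat_powr_pos_def[OF X] Q le]) (use s in auto)
  then show ?thesis using s by (simp add: mat_powr_mat_powr[OF X] mat_powr_one[OF X])
qed

lemma loewner_le_mat_max:
  "loewner_le (mat (complex_of_real a)) X \<Longrightarrow> loewner_le (mat (complex_of_real b)) X
    \<Longrightarrow> loewner_le (mat (complex_of_real (max a b))) X"
  by (simp add: max_def)

theorem mainTheorem6:
  fixes s t p :: real and A B Q X :: "complex^'n^'n"
  assumes "s \<ge> 1" and "t \<ge> 1" and "p \<ge> 1"
    and "invertible A" and "invertible B" and "pos_def Q"
    and "pos_def X"
    and "mat_powr X s + adjoint A ** mat_powr X (-t) ** A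
           + adjoint B ** mat_powr X (-p) ** B = Q"
  shows "loewner_le
           (mat (complex_of_real
              (max (lambda_min (A ** matrix_inv Q ** adjoint A) powr (1/t))
                   (lambda_min (B ** matrix_inv Q ** adjoint B) powr (1/p)))))
           X
         \<and> loewner_le X (mat_powr Q (1/s))"
proof -
  define Ps Pt Pp where "Ps = mat_powr X s" and "Pt = adjoint A ** mat_powr X (-t) ** A"
    and "Pp = adjoint B ** mat_powr X (-p) ** B"
  have psd: "pos_semidef Ps" "pos_semidef Pt" "pos_semidef Pp"
    unfolding Ps_def Pt_def Pp_def
    using pos_def_imp_pos_semidef[OF mat_powr_pos_def[OF assms(7)]] by (simp_all add: pos_semidef_congruence)
  then have herm: "hermitian Ps" "hermitian Pt" "hermitian Pp" by (simp_all add: pos_semidef_def)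
  have Q: "Q = Ps + Pt + Pp" using assms(8) by (simp add: Ps_def Pt_def Pp_def)
  have "loewner_le Ps Q" "loewner_le Pt Q" "loewner_le Pp Q"
    unfolding Q
    using loewner_le_add_right[OF loewner_le_add_right[OF loewner_le_refl[OF herm(1)] psd(2)] psd(3)]
      loewner_le_add_right[OF loewner_le_add_left[OF loewner_le_refl[OF herm(2)] psd(1)] psd(3)]
      loewner_le_add_left[OF loewner_le_refl[OF herm(3)] pos_semidef_add[OF psd(1,2)]]
    by simp_all
  then show ?thesis
    using assms(1-7) unfolding Ps_def Pt_def Pp_def
    by (intro conjI loewner_le_mat_max mat_lambda_min_powr_le loewner_le_mat_powr_root) auto
qed

end
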